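(* Let $n$ be a positive integer and let $A(n)=(a_{ij})$, $p=p(n)$, $pp=pp(n)$, $b(n)$ be as in the context. Let $m\ge 1$ be an integer such that $\overline{p}=pm$ satisfies $\lfloor \overline{p}/2\rfloor> b(n)$, put $r=\lfloor\overline{p}/2\rfloor$, let $v$ be an integer with $v\ge pp+\overline{p}$, and let $B=(b_{ij})_{1\le i,j\le\overline{p}}$ be the $\overline{p}\times\overline{p}$ matrix with $b_{ij}=a_{v+i,v+j}$ if $i-r\le j\le i+r$; $b_{ij}=a_{v+i,v+j-\overline{p}}$ if $j>i+r$; $b_{ij}=a_{v+i,v+j+\overline{p}}$ if $j<i-r$. Then every row of $B$ contains exactly $n+1$ ones.
   Context: $\mathbb{N}=\{1,2,3,\dots\}$. Fix a positive integer $n$. The infinite $\{0,1\}$-matrix $A(n)=(a_{ij})_{i,j\in\mathbb{N}}$ is defined recursively. Its entries are determined row by row (row $1$ first), and within each row from left to right, so that $a_{kl}$ is determined after all $a_{ij}$ with $i<k$ and all $a_{kj}$ with $j<l$. One sets $a_{kl}=1$ if and only if all of the following hold: (1) $\sum_{j<l}a_{kj}<n+1$; (2) $\sum_{i<k}a_{il}<n+1$; (3) there is no pair $(i,j)$ with $1\le i<k$, $1\le j<l$ and $a_{ij}=a_{il}=a_{kj}=1$. Otherwise $a_{kl}=0$. The matrix $A(n)$ is eventually periodic along the diagonal: there exist $c\ge0$, $q\ge1$ with $a_{i+q,j+q}=a_{ij}$ for all $i>c$, $j\ge1$. The period $p=p(n)$ is the smallest $q\ge1$ for which such a $c$ exists,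 and the preperiod $pp=pp(n)$ is the smallest $c\ge 0$ with $a_{i+p,j+p}=a_{ij}$ for all $i>c$, $j\ge 1$. Define $b(n)=\max\{|j-i| : i,j\ge1,\ a_{ij}=1,\ i>pp(n)\}$. *)

theory Defs
  imports Main
begin

text \<open>Entry a_{kl} of the matrix A(n), indices k,l >= 1 (1-based; index 0 is
  outside the matrix and is set to False). True encodes the entry 1.\<close>

function aA :: "nat \<Rightarrow> nat \<Rightarrow> nat \<Rightarrow> bool" where
  "aA n k l =
    (if k = 0 \<or> l = 0 then False
     else (\<Sum>j\<in>{1..<l}. (if aA n k j then 1 else 0)) < n + 1
        \<and> (\<Sum>i\<in>{1..<k}. (if aA n i l then 1 else 0)) < n + 1
        \<and> \<not> (\<exists>i\<in>{1..<k}. \<exists>j\<in>{1..<l}. aA n i j \<and> aA n i l \<and> aA n k j))"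
  by pat_completeness auto
termination
  by (relation "inv_image (less_than <*lex*> less_than) (\<lambda>(n, k, l). (k, l))") auto

definition periodic_from :: "nat \<Rightarrow> nat \<Rightarrow> nat \<Rightarrow> bool" where
  "periodic_from n q c \<longleftrightarrow> (\<forall>i j. i > c \<and> j \<ge> 1 \<longrightarrow> aA n (i + q) (j + q) = aA n i j)"

definition period :: "nat \<Rightarrow> nat" where
  "period n = (LEAST q. q \<ge> 1 \<and> (\<exists>c. periodic_from n q c))"

definition preperiod :: "nat \<Rightarrow> nat" where
  "preperiod n = (LEAST c. periodic_from n (period n) c)"

definition bwidth :: "nat \<Rightarrow> nat" where
  "bwidth n = Max {nat \<bar>int j - int i\<bar> | i j. i \<ge> 1 \<and> j \<ge> 1 \<and> aA n i j \<and> i > preperiod n}"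

definition Bmat :: "nat \<Rightarrow> nat \<Rightarrow> nat \<Rightarrow> nat \<Rightarrow> nat \<Rightarrow> bool" where
  "Bmat n pbar v i j =
    (let r = pbar div 2 in
     if int i - int r \<le> int j \<and> int j \<le> int i + int r then aA n (v + i) (v + j)
     else if int j > int i + int r then aA n (v + i) (nat (int v + int j - int pbar))
     else aA n (v + i) (v + j + pbar))"

end

theory Submission
  imports Defs
begin

text \<open>Every row \<open>k \<ge> 1\<close> of \<open>A(n)\<close> holds exactly \<open>n + 1\<close> ones: a column beyond all ones
  of the rows \<open>1..k\<close> is blocked neither by (2) nor by (3), so only (1) can end the row.
  \<open>A(n)\<close> is symmetric, and a one at \<open>(k, l)\<close> has \<open>l \<le> k + n + (n+1)^3\<close>: left of it, every
  zero of row \<open>k\<close> lies in a full column (at most \<open>k - 1\<close> of these, by double counting) or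
  closes a rectangle (at most \<open>(n+1)^3\<close> columns). So the ones lie in a band and \<open>b(n)\<close> is
  the maximum of a finite set. Row \<open>i\<close> of \<open>B\<close> is row \<open>v + i\<close> of \<open>A(n)\<close> read through an
  injective wrap-around reindexing of the columns whose range contains every column
  within distance \<open>r > b(n)\<close> of \<open>v + i\<close>, hence every one of that row.\<close>

declare aA.simps[simp del]

lemma sum_indicator_eq_card:
  "finite A \<Longrightarrow> (\<Sum>j\<in>A. (if P j then 1 else 0::nat)) = card {j\<in>A. P j}"
  by (simp add: sum.If_cases Int_def)

lemma aA_iff_card:
  "aA n k l \<longleftrightarrow> k \<noteq> 0 \<and> l \<noteq> 0
     \<and> card {j\<in>{1..<l}. aA n k j} < n + 1
     \<and> card {i\<in>{1..<k}. aA n i l} < n + 1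
     \<and> \<not> (\<exists>i\<in>{1..<k}. \<exists>j\<in>{1..<l}. aA n i j \<and> aA n i l \<and> aA n k j)"
  by (subst aA.simps) (simp add: sum_indicator_eq_card)

lemma aA_pos: "aA n k l \<Longrightarrow> 0 < k \<and> 0 < l"
  by (simp add: aA_iff_card[of n k l])

text \<open>The three conditions are invariant under transposition, and the entries they refer
  to precede \<open>(k, l)\<close> in both the row-major and the column-major order.\<close>

lemma aA_sym: "aA n k l = aA n l k"
proof (induction "k + l" arbitrary: k l rule: less_induct)
  case less
  have row: "{j\<in>{1..<l}. aA n k j} = {j\<in>{1..<l}. aA n j k}"
    and col: "{i\<in>{1..<k}. aA n i l} = {i\<in>{1..<k}. aA n l i}"
    using less by auto
  have rect: "(\<exists>i\<in>{1..<k}. \<exists>j\<in>{1..<l}. aA n i j \<and> aA n i l \<and> aA n k j)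
      \<longleftrightarrow> (\<exists>j\<in>{1..<l}. \<exists>i\<in>{1..<k}. aA n j i \<and> aA n j k \<and> aA n l i)"
    using less by (metis add_strict_mono atLeastLessThan_iff add_strict_left_mono add_strict_right_mono)
  show ?case
    by (subst (1 2) aA_iff_card) (auto simp only: row col rect)
qed

lemma card_prefix_le_if_prefix_less:
  fixes P :: "nat \<Rightarrow> bool"
  assumes "\<And>l. P l \<Longrightarrow> card {j\<in>{1..<l}. P j} < K"
  shows "card {j\<in>{1..<l}. P j} \<le> K"
proof (induction l)
  case (Suc l)
  show ?case
  proof (cases "1 \<le> l \<and> P l")
    case True
    then have "{j\<in>{1..<Suc l}. P j} = insert l {j\<in>{1..<l}. P j}" by auto
    then show ?thesis using True assms[of l] by (simp add: Suc_le_eq)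
  next
    case False
    then have "{j\<in>{1..<Suc l}. P j} = {j\<in>{1..<l}. P j}" by (auto simp: less_Suc_eq)
    then show ?thesis using Suc by simp
  qed
qed simp

lemma finite_card_le_if_prefix_less:
  fixes P :: "nat \<Rightarrow> bool"
  assumes "\<not> P 0" and "\<And>l. P l \<Longrightarrow> card {j\<in>{1..<l}. P j} < K"
  shows "finite {j. P j} \<and> card {j. P j} \<le> K"
proof -
  have subset_card: "card F \<le> K" if F: "F \<subseteq> {j. P j}" "finite F" for F
  proof -
    have "F \<subseteq> {j\<in>{1..<Suc (Max F)}. P j}"
    proof
      fix x assume x: "x \<in> F"
      then have "P x" using F(1) by blast
      then have "1 \<le> x" using assms(1) by (cases x) auto
      moreover have "x \<le> Max F" using F(2) x by (rule Max_ge)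
      ultimately show "x \<in> {j\<in>{1..<Suc (Max F)}. P j}" using \<open>P x\<close> by simp
    qed
    then have "card F \<le> card {j\<in>{1..<Suc (Max F)}. P j}" by (rule card_mono[rotated]) simp
    also have "\<dots> \<le> K" by (rule card_prefix_le_if_prefix_less[OF assms(2)])
    finally show ?thesis .
  qed
  have "finite {j. P j}"
  proof (rule ccontr)
    assume "infinite {j. P j}"
    then obtain F where F: "F \<subseteq> {j. P j}" "finite F" "card F = Suc K"
      using infinite_arbitrarily_large by blast
    show False using subset_card[OF F(1,2)] F(3) by simp
  qed
  then show ?thesis using subset_card[OF subset_refl] by blast
qed

lemma finite_row: "finite {l. aA n k l}"
  and card_row_le: "card {l. aA n k l} \<le> n + 1"
proof -
  have "card {j\<in>{1..<l}. aA n k j} < n + 1" if "aA n k l" for l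
    using that aA_iff_card[of n k l] by blast
  then show "finite {l. aA n k l}" "card {l. aA n k l} \<le> n + 1"
    using finite_card_le_if_prefix_less[of "aA n k" "n + 1"] aA_pos by blast+
qed

lemma finite_col: "finite {k. aA n k l}"
  and card_col_le: "card {k. aA n k l} \<le> n + 1"
proof -
  have "{k. aA n k l} = {k. aA n l k}" using aA_sym by blast
  then show "finite {k. aA n k l}" "card {k. aA n k l} \<le> n + 1"
    using finite_row card_row_le by simp_all
qed

lemma card_row_eq:
  assumes "0 < k" shows "card {l. aA n k l} = n + 1"
proof (rule ccontr)
  assume "card {l. aA n k l} \<noteq> n + 1"
  then have less: "card {l. aA n k l} < n + 1" using card_row_le[of n k] by simp
  define U where "U = (\<Union>i\<in>{1..k}. {j. aA n i j})"
  have "finite U" unfolding U_def using finite_row by blast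
  define l where "l = Suc (Max (insert 0 U))"
  have "u < l" if "u \<in> U" for u
    using \<open>finite U\<close> that unfolding l_def by (simp add: le_imp_less_Suc)
  then have fresh: "l \<notin> U" by blast
  have "aA n k l"
  proof (subst aA_iff_card, intro conjI)
    show "k \<noteq> 0" "l \<noteq> 0" using assms by (simp_all add: l_def)
    have "card {j\<in>{1..<l}. aA n k j} \<le> card {j. aA n k j}"
      by (rule card_mono[OF finite_row]) blast
    then show "card {j\<in>{1..<l}. aA n k j} < n + 1" using less by simp
    have empty: "{i\<in>{1..<k}. aA n i l} = {}" using fresh unfolding U_def by auto
    show "card {i\<in>{1..<k}. aA n i l} < n + 1" unfolding empty by simp
    show "\<not> (\<exists>i\<in>{1..<k}. \<exists>j\<in>{1..<l}. aA n i j \<and> aA n i l \<and> aA n k j)"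
      using fresh unfolding U_def by auto
  qed
  then show False using fresh assms unfolding U_def by auto
qed

lemma sum_card_filter_swap:
  "finite I \<Longrightarrow> finite J \<Longrightarrow>
    (\<Sum>i\<in>I. card {c\<in>J. P i c}) = (\<Sum>c\<in>J. card {i\<in>I. P i c})"
  using sum.swap[where g = "\<lambda>i c. if P i c then 1 else (0::nat)" and A = I and B = J]
  by (simp add: sum_indicator_eq_card)

lemma card_full_columns_le:
  "card {c\<in>{1..<l}. n + 1 \<le> card {i\<in>{1..<k}. aA n i c}} \<le> k - 1"
proof -
  define F where "F = {c\<in>{1..<l}. n + 1 \<le> card {i\<in>{1..<k}. aA n i c}}"
  have "(n + 1) * card F \<le> (\<Sum>c\<in>F. card {i\<in>{1..<k}. aA n i c})"
    using sum_bounded_below[of F "n + 1"] unfolding F_def by (simp add: mult.commute)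
  also have "\<dots> \<le> (\<Sum>c\<in>{1..<l}. card {i\<in>{1..<k}. aA n i c})"
    by (rule sum_mono2) (auto simp: F_def)
  also have "\<dots> = (\<Sum>i\<in>{1..<k}. card {c\<in>{1..<l}. aA n i c})"
    by (rule sum_card_filter_swap[symmetric]) auto
  also have "\<dots> \<le> (\<Sum>i\<in>{1..<k}. n + 1)"
  proof (rule sum_mono)
    fix i
    have "card {c\<in>{1..<l}. aA n i c} \<le> card {c. aA n i c}"
      by (rule card_mono[OF finite_row]) blast
    then show "card {c\<in>{1..<l}. aA n i c} \<le> n + 1" using card_row_le[of n i] by linarith
  qed
  also have "\<dots> = (n + 1) * (k - 1)" by simp
  finally have "card F \<le> k - 1" by (simp only: mult_le_cancel1)
  then show ?thesis unfolding F_def .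
qed

lemma card_UN_le_mult:
  assumes "finite A" "card A \<le> a" "\<And>x. x \<in> A \<Longrightarrow> finite (B x) \<and> card (B x) \<le> b"
  shows "finite (\<Union>x\<in>A. B x) \<and> card (\<Union>x\<in>A. B x) \<le> a * b"
proof -
  have "card (\<Union>x\<in>A. B x) \<le> (\<Sum>x\<in>A. card (B x))" using card_UN_le assms(1) by blast
  also have "\<dots> \<le> card A * b" using sum_bounded_above[of A "\<lambda>x. card (B x)" b] assms(3) by simp
  also have "\<dots> \<le> a * b" using assms(2) by simp
  finally show ?thesis using assms by auto
qed

lemma rectangle_columns_bound:
  "finite (\<Union>j\<in>{j. aA n k j}. \<Union>i\<in>{i. aA n i j}. {c. aA n i c})
   \<and> card (\<Union>j\<in>{j. aA n k j}. \<Union>i\<in>{i. aA n i j}. {c. aA n i c}) \<le> (n + 1) ^ 3"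
proof -
  have inner: "finite (\<Union>i\<in>{i. aA n i j}. {c. aA n i c})
      \<and> card (\<Union>i\<in>{i. aA n i j}. {c. aA n i c}) \<le> (n + 1) * (n + 1)" for j
    by (rule card_UN_le_mult) (blast intro: finite_col card_col_le finite_row card_row_le)+
  then have "finite (\<Union>j\<in>{j. aA n k j}. \<Union>i\<in>{i. aA n i j}. {c. aA n i c})
   \<and> card (\<Union>j\<in>{j. aA n k j}. \<Union>i\<in>{i. aA n i j}. {c. aA n i c}) \<le> (n + 1) * ((n + 1) * (n + 1))"
    by (rule card_UN_le_mult[OF finite_row card_row_le])
  then show ?thesis by (simp only: power3_eq_cube mult.assoc)
qed

lemma aA_col_le:
  assumes "aA n k l" shows "l \<le> k + n + (n + 1) ^ 3"
proof -
  define R where "R = {c\<in>{1..<l}. aA n k c}"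
  define F where "F = {c\<in>{1..<l}. n + 1 \<le> card {i\<in>{1..<k}. aA n i c}}"
  define Q where "Q = (\<Union>j\<in>{j. aA n k j}. \<Union>i\<in>{i. aA n i j}. {c. aA n i c})"
  have "0 < k" using aA_pos[OF assms] by simp
  have R: "card R \<le> n" using assms aA_iff_card[of n k l] unfolding R_def by simp
  have F: "card F \<le> k - 1" unfolding F_def by (rule card_full_columns_le)
  have Q: "finite Q" "card Q \<le> (n + 1) ^ 3" using rectangle_columns_bound unfolding Q_def by auto
  have "{1..<l} \<subseteq> R \<union> F \<union> Q"
  proof
    fix c assume c: "c \<in> {1..<l}"
    show "c \<in> R \<union> F \<union> Q"
    proof (rule ccontr)
      assume nc: "c \<notin> R \<union> F \<union> Q"
      have "card {j\<in>{1..<c}. aA n k j} \<le> card R"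
        unfolding R_def by (rule card_mono) (use c in auto)
      moreover have "\<not> aA n k c" "card {i\<in>{1..<k}. aA n i c} < n + 1"
        using nc c unfolding R_def F_def by auto
      ultimately have "\<exists>i\<in>{1..<k}. \<exists>j\<in>{1..<c}. aA n i j \<and> aA n i c \<and> aA n k j"
        using c R \<open>0 < k\<close> aA_iff_card[of n k c] by auto
      then have "c \<in> Q" unfolding Q_def by auto
      then show False using nc by simp
    qed
  qed
  then have "card {1..<l} \<le> card (R \<union> F \<union> Q)"
    by (rule card_mono[rotated]) (simp add: R_def F_def Q)
  also have "\<dots> \<le> card R + card F + card Q"
    using card_Un_le[of "R \<union> F" Q] card_Un_le[of R F] by linarith
  finally show ?thesis using R F Q \<open>0 < k\<close> by simp
qed

lemma aA_band:
  assumes "aA n k l" shows "nat \<bar>int l - int k\<bar> \<le> n + (n + 1) ^ 3"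
  using aA_col_le[OF assms] aA_col_le[of n l k] assms by (simp add: aA_sym[of n l k])

lemma le_bwidth:
  assumes "aA n k l" "preperiod n < k" shows "nat \<bar>int l - int k\<bar> \<le> bwidth n"
proof -
  define S where "S = {nat \<bar>int j - int i\<bar> | i j. i \<ge> 1 \<and> j \<ge> 1 \<and> aA n i j \<and> i > preperiod n}"
  have "S \<subseteq> {..n + (n + 1) ^ 3}" unfolding S_def using aA_band by auto
  then have "finite S" by (rule finite_subset) simp
  moreover have "nat \<bar>int l - int k\<bar> \<in> S" unfolding S_def using assms aA_pos[OF assms(1)] by force
  ultimately show ?thesis unfolding bwidth_def S_def[symmetric] by simp
qed

definition wrap_col :: "nat \<Rightarrow> nat \<Rightarrow> nat \<Rightarrow> nat \<Rightarrow> nat \<Rightarrow> nat" where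
  "wrap_col P r v i j =
    (if int i - int r \<le> int j \<and> int j \<le> int i + int r then v + j
     else if int j > int i + int r then nat (int v + int j - int P) else v + j + P)"

lemma Bmat_eq_aA_wrap_col: "Bmat n P v i j = aA n (v + i) (wrap_col P (P div 2) v i j)"
  unfolding Bmat_def wrap_col_def Let_def by simp

lemma of_nat_wrap_col:
  assumes "P \<le> v"
  shows "int (wrap_col P r v i j) =
    (if int i - int r \<le> int j \<and> int j \<le> int i + int r then int v + int j
     else if int j > int i + int r then int v + int j - int P else int v + int j + int P)"
  using assms unfolding wrap_col_def by auto

lemma inj_on_wrap_col:
  assumes "P \<le> v" "2 * r \<le> P" shows "inj_on (wrap_col P r v i) {1..P}"
proof (rule inj_onI)
  fix x y assume "x \<in> {1..P}" "y \<in> {1..P}" "wrap_col P r v i x = wrap_col P r v i y"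
  then have "int (wrap_col P r v i x) = int (wrap_col P r v i y)" "1 \<le> int x" "int x \<le> int P"
    "1 \<le> int y" "int y \<le> int P" by auto
  then have "int x = int y" using assms unfolding of_nat_wrap_col[OF assms(1)]
    by (simp split: if_splits; linarith)
  then show "x = y" by simp
qed

lemma wrap_col_covers_window:
  assumes "P \<le> v" "2 * r \<le> P" "1 \<le> i" "i \<le> P" "1 \<le> c" "\<bar>int c - int (v + i)\<bar> < int r"
  shows "c \<in> wrap_col P r v i ` {1..P}"
proof -
  define d where "d = int c - int v"
  define j where "j = nat (if d < 1 then d + int P else if d > int P then d - int P else d)"
  have j: "int j \<in> {d, d + int P, d - int P}" "1 \<le> j" "j \<le> P"
    using assms unfolding j_def d_def by (auto split: if_splits)
  have "int (wrap_col P r v i j) = int c"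
    using j assms unfolding of_nat_wrap_col[OF assms(1)] d_def by auto
  then show ?thesis using j by (metis atLeastAtMost_iff image_eqI of_nat_eq_iff)
qed

lemma card_filter_reindex:
  assumes "inj_on f A" "{c. Q c} \<subseteq> f ` A"
  shows "card {j\<in>A. Q (f j)} = card {c. Q c}"
proof -
  have "f ` {j\<in>A. Q (f j)} = {c. Q c}" using assms(2) by auto
  moreover have "inj_on f {j\<in>A. Q (f j)}" using assms(1) by (rule inj_on_subset) auto
  ultimately show ?thesis using card_image by metis
qed

theorem theorem4p1:
  fixes n m v :: nat
  assumes "n \<ge> 1"
    and "m \<ge> 1"
    and "(period n * m) div 2 > bwidth n"
    and "v \<ge> preperiod n + period n * m"
  shows "\<forall>i\<in>{1..period n * m}.
           card {j \<in> {1..period n * m}. Bmat n (period n * m) v i j} = n + 1"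
proof
  define P where "P = period n * m"
  define r where "r = P div 2"
  fix i assume "i \<in> {1..period n * m}"
  then have i: "1 \<le> i" "i \<le> P" unfolding P_def by auto
  have "P \<le> v" "2 * r \<le> P" using assms(4) unfolding P_def r_def by auto
  have "{c. aA n (v + i) c} \<subseteq> wrap_col P r v i ` {1..P}"
  proof
    fix c assume "c \<in> {c. aA n (v + i) c}"
    then have c: "aA n (v + i) c" by simp
    have "preperiod n < v + i" using assms(4) i unfolding P_def by linarith
    then have "nat \<bar>int c - int (v + i)\<bar> < r"
      using le_bwidth[OF c] assms(3) unfolding r_def P_def by linarith
    then show "c \<in> wrap_col P r v i ` {1..P}"
      using wrap_col_covers_window[OF \<open>P \<le> v\<close> \<open>2 * r \<le> P\<close> i] aA_pos[OF c] by simp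
  qed
  then have "card {j\<in>{1..P}. aA n (v + i) (wrap_col P r v i j)} = card {c. aA n (v + i) c}"
    by (rule card_filter_reindex[OF inj_on_wrap_col[OF \<open>P \<le> v\<close> \<open>2 * r \<le> P\<close>]])
  then show "card {j \<in> {1..period n * m}. Bmat n (period n * m) v i j} = n + 1"
    using card_row_eq[of "v + i" n] i unfolding Bmat_eq_aA_wrap_col P_def r_def by simp
qed

end
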